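(* Let $H$ be a monoid, with identity $1_H$ and group of units $H^\times$. The following are equivalent: (a) $\mathcal{P}_{\mathrm{fin},1}(H)$ is UmF; (b) $H\setminus H^\times$ is an almost-breakable subsemigroup of $H$, the group of units $H^\times$ has order $\le 2$, $H$ is the trivial ideal extension of $H\setminus H^\times$ by $H^\times$, and $\mathcal{P}_{\mathrm{fin},1}\big((H\setminus H^\times)\cup\{1_H\}\big)$ is UmF.
   Context: For a monoid $H$, $\mathcal{P}_{\mathrm{fin},1}(H)$ denotes the set of all non-empty finite subsets of $H$ containing $1_H$; it is a monoid under setwise multiplication $XY=\{xy: x\in X, y\in Y\}$, with identity $\{1_H\}$ (the reduced finitary power monoid of $H$). Divisibility in a monoid $M$: $x\mid_M y$ iff $y\in MxM=\{uxv: u,v\in M\}$; $x,y$ are associated if each divides the other; $x$ properly divides $y$ if $x\mid_M y$ but $y\nmid_M x$. A unit-divisor is an element dividing $1_M$; otherwise it is a non-unit-divisor. An irreducible of $M$ is a non-unit-divisor $a$ such that $a\neq xy$ for all non-unit-divisors $x,y$ that both properly divide $a$. Factorizations: a factorization of $x\in M$ is a finite word $a_1\ast\cdots\ast a_n$ (possibly empty) in the free monoid over the set of irreducibles of $M$ with $a_1\cdots a_n=x$. For words $\mathfrak a,\mathfrak b$ over $M$, write $\mathfrak a\sqsubseteq\mathfrak b$ if $\mathfrak a$ is, up to replacing letters by associated elements, a subword (subsequence) of some permutation of $\mathfrak b$; $\mathfrak a,\mathfrak b$ are equivalent if $\mathfrak a\sqsubseteq\mathfrak b\sqsubseteq\mathfrak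 a$. A factorization $\mathfrak a$ of $x$ is minimal if there is no factorization $\mathfrak b$ of $x$ with $\mathfrak b\sqsubseteq\mathfrak a$ and $\mathfrak a\not\sqsubseteq\mathfrak b$. $M$ is factorable if every non-unit-divisor is a product of irreducibles, and $M$ is UmF if it is factorable and any two minimal factorizations of the same element are equivalent. A semigroup $S$ is almost-breakable if for all $x,y\in S$, $xy\in\{x,y\}$ or $yx\in\{x,y\}$. For disjoint semigroups $G$ and $K$, the trivial ideal extension of $K$ by $G$ is the semigroup on $G\cup K$ extending the operations of $G$ and $K$ by $xy=yx=y$ for all $x\in G$, $y\in K$; "$H$ is the trivial ideal extension of $H\setminus H^\times$ by $H^\times$" means the multiplication of $H$ coincides with this operation, i.e. $uy=yu=y$ for all $u\in H^\times$, $y\in H\setminus H^\times$. *)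

theory Defs
  imports "HOL-Algebra.Group" "HOL-Library.Sublist" "HOL-Library.Multiset"
begin

definition mdvd :: "('a, 'b) monoid_scheme \<Rightarrow> 'a \<Rightarrow> 'a \<Rightarrow> bool" where
  "mdvd M x y \<longleftrightarrow> (\<exists>u\<in>carrier M. \<exists>v\<in>carrier M. y = u \<otimes>\<^bsub>M\<^esub> x \<otimes>\<^bsub>M\<^esub> v)"

definition massoc :: "('a, 'b) monoid_scheme \<Rightarrow> 'a \<Rightarrow> 'a \<Rightarrow> bool" where
  "massoc M x y \<longleftrightarrow> mdvd M x y \<and> mdvd M y x"

definition proper_mdvd :: "('a, 'b) monoid_scheme \<Rightarrow> 'a \<Rightarrow> 'a \<Rightarrow> bool" where
  "proper_mdvd M x y \<longleftrightarrow> mdvd M x y \<and> \<not> mdvd M y x"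

definition unit_divisor :: "('a, 'b) monoid_scheme \<Rightarrow> 'a \<Rightarrow> bool" where
  "unit_divisor M x \<longleftrightarrow> mdvd M x \<one>\<^bsub>M\<^esub>"

definition irreducible_m :: "('a, 'b) monoid_scheme \<Rightarrow> 'a \<Rightarrow> bool" where
  "irreducible_m M a \<longleftrightarrow> a \<in> carrier M \<and> \<not> unit_divisor M a \<and>
     \<not> (\<exists>x\<in>carrier M. \<exists>y\<in>carrier M. \<not> unit_divisor M x \<and> \<not> unit_divisor M y \<and>
           proper_mdvd M x a \<and> proper_mdvd M y a \<and> a = x \<otimes>\<^bsub>M\<^esub> y)"

definition word_prod :: "('a, 'b) monoid_scheme \<Rightarrow> 'a list \<Rightarrow> 'a" where
  "word_prod M xs = foldr (\<lambda>a b. a \<otimes>\<^bsub>M\<^esub> b) xs \<one>\<^bsub>M\<^esub>"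

definition factorization :: "('a, 'b) monoid_scheme \<Rightarrow> 'a \<Rightarrow> 'a list \<Rightarrow> bool" where
  "factorization M x as \<longleftrightarrow> (\<forall>a\<in>set as. irreducible_m M a) \<and> word_prod M as = x"

definition word_le :: "('a, 'b) monoid_scheme \<Rightarrow> 'a list \<Rightarrow> 'a list \<Rightarrow> bool" where
  "word_le M as bs \<longleftrightarrow>
     (\<exists>ps cs. mset ps = mset bs \<and> subseq cs ps \<and> list_all2 (massoc M) as cs)"

definition word_equiv :: "('a, 'b) monoid_scheme \<Rightarrow> 'a list \<Rightarrow> 'a list \<Rightarrow> bool" where
  "word_equiv M as bs \<longleftrightarrow> word_le M as bs \<and> word_le M bs as"

definition minimal_factorization :: "('a, 'b) monoid_scheme \<Rightarrow> 'a \<Rightarrow> 'a list \<Rightarrow> bool" where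
  "minimal_factorization M x as \<longleftrightarrow> factorization M x as \<and>
     \<not> (\<exists>bs. factorization M x bs \<and> word_le M bs as \<and> \<not> word_le M as bs)"

definition factorable :: "('a, 'b) monoid_scheme \<Rightarrow> bool" where
  "factorable M \<longleftrightarrow> (\<forall>x\<in>carrier M. \<not> unit_divisor M x \<longrightarrow> (\<exists>as. factorization M x as))"

definition UmF :: "('a, 'b) monoid_scheme \<Rightarrow> bool" where
  "UmF M \<longleftrightarrow> factorable M \<and>
     (\<forall>x\<in>carrier M. \<forall>as bs. minimal_factorization M x as \<and> minimal_factorization M x bs
        \<longrightarrow> word_equiv M as bs)"

definition Pfin1 :: "('a, 'b) monoid_scheme \<Rightarrow> 'a set monoid" where
  "Pfin1 H = \<lparr> carrier = {X. finite X \<and> X \<noteq> {} \<and> X \<subseteq> carrier H \<and> \<one>\<^bsub>H\<^esub> \<in> X},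
              monoid.mult = (\<lambda>X Y. {x \<otimes>\<^bsub>H\<^esub> y | x y. x \<in> X \<and> y \<in> Y}),
              monoid.one = {\<one>\<^bsub>H\<^esub>} \<rparr>"

definition almost_breakable :: "('a, 'b) monoid_scheme \<Rightarrow> 'a set \<Rightarrow> bool" where
  "almost_breakable H S \<longleftrightarrow> (\<forall>x\<in>S. \<forall>y\<in>S. x \<otimes>\<^bsub>H\<^esub> y \<in> {x, y} \<or> y \<otimes>\<^bsub>H\<^esub> x \<in> {x, y})"

definition subsemigroup :: "('a, 'b) monoid_scheme \<Rightarrow> 'a set \<Rightarrow> bool" where
  "subsemigroup H S \<longleftrightarrow> S \<subseteq> carrier H \<and> (\<forall>x\<in>S. \<forall>y\<in>S. x \<otimes>\<^bsub>H\<^esub> y \<in> S)"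

definition trivial_ideal_ext :: "('a, 'b) monoid_scheme \<Rightarrow> bool" where
  "trivial_ideal_ext H \<longleftrightarrow> (\<forall>u\<in>Units H. \<forall>y\<in>carrier H - Units H.
      u \<otimes>\<^bsub>H\<^esub> y = y \<and> y \<otimes>\<^bsub>H\<^esub> u = y)"

end

theory Submission
  imports Defs
begin

text \<open>
  In \<open>P = P\<^sub>f\<^sub>i\<^sub>n\<^sub>,\<^sub>1(H)\<close> every set contains \<open>1\<close>, so \<open>X \<subseteq> XY \<supseteq> Y\<close>: divisors are subsets,
  associated sets are equal, \<open>{1}\<close> is the only unit-divisor, the order on words is inclusion of
  multisets, and every set other than \<open>{1}\<close> factors into irreducibles by induction on its size.

  For \<open>a, b \<noteq> 1\<close> with \<open>{1,a}{1,b} = {1,a,b,ab}\<close> different from both factors, \<open>{1,a} * {1,b}\<close> is a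
  minimal factorization, so under UmF every factorization of \<open>{1,a,b,ab}\<close> contains both pairs.
  Testing this against \<open>{1,x}\<^sup>3\<close>, \<open>{1,u}{1,uy}\<close> and \<open>{1,x,y}{1,y}\<close> shows that \<open>x\<^sup>2 \<in> {1,x}\<close>, that
  a non-trivial unit \<open>u\<close> satisfies \<open>u\<^sup>2 = 1\<close> and \<open>uy = yu = y\<close> for all \<open>y \<notin> {1,u}\<close> (so there is at
  most one), and that the non-units form an almost-breakable subsemigroup. UmF passes to the
  power monoid of a submonoid, because the factors of a set are subsets of it.

  Conversely, if \<open>H\<^sup>\<times> = {1,u}\<close> acts trivially and the non-units are closed, \<open>X \<mapsto> X - {u}\<close> is a
  homomorphism onto the power monoid of \<open>H - {u}\<close>. The only irreducible containing \<open>u\<close> is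
  \<open>{1,u}\<close>, and a minimal factorization of \<open>X\<close> contains it once if \<open>u \<in> X\<close> and not at all
  otherwise; so the minimal factorizations of \<open>X\<close> are those of \<open>X - {u}\<close>, with \<open>{1,u}\<close> added when
  \<open>u \<in> X\<close>.
\<close>

section \<open>Reduced finitary power monoids\<close>

lemma carrier_Pfin1_iff:
  "X \<in> carrier (Pfin1 H) \<longleftrightarrow> finite X \<and> X \<subseteq> carrier H \<and> \<one>\<^bsub>H\<^esub> \<in> X"
  by (auto simp: Pfin1_def)

lemma mult_Pfin1: "X \<otimes>\<^bsub>Pfin1 H\<^esub> Y = {x \<otimes>\<^bsub>H\<^esub> y | x y. x \<in> X \<and> y \<in> Y}"
  by (simp add: Pfin1_def)

lemma mem_mult_Pfin1_iff: "z \<in> X \<otimes>\<^bsub>Pfin1 H\<^esub> Y \<longleftrightarrow> (\<exists>x\<in>X. \<exists>y\<in>Y. z = x \<otimes>\<^bsub>H\<^esub> y)"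
  by (auto simp: mult_Pfin1)

lemma mult_Pfin1_memI: "x \<in> X \<Longrightarrow> y \<in> Y \<Longrightarrow> x \<otimes>\<^bsub>H\<^esub> y \<in> X \<otimes>\<^bsub>Pfin1 H\<^esub> Y"
  by (auto simp: mult_Pfin1)

lemma one_Pfin1 [simp]: "\<one>\<^bsub>Pfin1 H\<^esub> = {\<one>\<^bsub>H\<^esub>}"
  by (simp add: Pfin1_def)

lemma monoid_Pfin1:
  assumes "monoid H"
  shows "monoid (Pfin1 H)"
proof -
  interpret monoid H by fact
  show ?thesis
  proof (rule monoidI)
    fix X Y assume "X \<in> carrier (Pfin1 H)" "Y \<in> carrier (Pfin1 H)"
    then show "X \<otimes>\<^bsub>Pfin1 H\<^esub> Y \<in> carrier (Pfin1 H)"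
      unfolding carrier_Pfin1_iff mult_Pfin1
      by (auto intro!: finite_image_set2 exI[of _ "\<one>\<^bsub>H\<^esub>"])
  next
    fix X Y Z assume "X \<in> carrier (Pfin1 H)" "Y \<in> carrier (Pfin1 H)" "Z \<in> carrier (Pfin1 H)"
    then show "X \<otimes>\<^bsub>Pfin1 H\<^esub> Y \<otimes>\<^bsub>Pfin1 H\<^esub> Z = X \<otimes>\<^bsub>Pfin1 H\<^esub> (Y \<otimes>\<^bsub>Pfin1 H\<^esub> Z)"
      unfolding carrier_Pfin1_iff mult_Pfin1 by (auto simp: subset_iff) (metis m_assoc)+
  next
    fix X assume "X \<in> carrier (Pfin1 H)"
    then show "\<one>\<^bsub>Pfin1 H\<^esub> \<otimes>\<^bsub>Pfin1 H\<^esub> X = X" "X \<otimes>\<^bsub>Pfin1 H\<^esub> \<one>\<^bsub>Pfin1 H\<^esub> = X"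
      unfolding carrier_Pfin1_iff mult_Pfin1 by (auto simp: subset_iff) (metis l_one, metis r_one)
  qed (simp add: carrier_Pfin1_iff)
qed

lemma subseq_imp_mset_subseteq: "subseq xs ys \<Longrightarrow> mset xs \<subseteq># mset ys"
  by (induction rule: list_emb.induct) (auto intro: subset_mset.order_trans)

lemma word_prod_Nil [simp]: "word_prod M [] = \<one>\<^bsub>M\<^esub>"
  by (simp add: word_prod_def)

lemma word_prod_Cons [simp]: "word_prod M (a # as) = a \<otimes>\<^bsub>M\<^esub> word_prod M as"
  by (simp add: word_prod_def)

lemma irreducible_m_carrier: "irreducible_m M a \<Longrightarrow> a \<in> carrier M"
  by (simp add: irreducible_m_def)

lemma irreducibles_subset_carrier: "\<forall>a\<in>set as. irreducible_m M a \<Longrightarrow> set as \<subseteq> carrier M"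
  by (auto dest: irreducible_m_carrier)

lemma minimal_factorization_imp_factorization:
  "minimal_factorization M x as \<Longrightarrow> factorization M x as"
  by (simp add: minimal_factorization_def)

lemma factorization_subset_carrier: "factorization M x as \<Longrightarrow> set as \<subseteq> carrier M"
  by (auto simp: factorization_def irreducible_m_def)

context monoid
begin

lemma word_prod_closed: "set as \<subseteq> carrier G \<Longrightarrow> word_prod G as \<in> carrier G"
  by (induction as) auto

lemma word_prod_append:
  "set as \<subseteq> carrier G \<Longrightarrow> set bs \<subseteq> carrier G \<Longrightarrow> word_prod G (as @ bs) = word_prod G as \<otimes> word_prod G bs"
  by (induction as) (auto simp: word_prod_closed m_assoc)

lemma factorization_closed: "factorization G x as \<Longrightarrow> x \<in> carrier G"
  by (metis factorization_def factorization_subset_carrier word_prod_closed)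

lemma mdvd_word_prod:
  assumes "set as \<subseteq> carrier G" "a \<in> set as"
  shows "mdvd G a (word_prod G as)"
proof -
  obtain xs ys where as: "as = xs @ a # ys" using split_list[OF assms(2)] by blast
  then have "word_prod G as = word_prod G xs \<otimes> a \<otimes> word_prod G ys"
    using assms(1) by (simp add: word_prod_append word_prod_closed m_assoc)
  then show ?thesis
    unfolding mdvd_def using assms(1) as by (auto intro!: word_prod_closed)
qed

end

locale power_monoid = monoid H for H :: "('a, 'b) monoid_scheme" (structure)
begin

abbreviation P where "P \<equiv> Pfin1 H"

sublocale P: monoid P
  by (rule monoid_Pfin1) (rule monoid_axioms)

lemma one_mem_P: "X \<in> carrier P \<Longrightarrow> \<one> \<in> X"
  by (simp add: carrier_Pfin1_iff)

lemma subset_carrier_P: "X \<in> carrier P \<Longrightarrow> X \<subseteq> carrier H"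
  by (simp add: carrier_Pfin1_iff)

lemma pair_in_P: "x \<in> carrier H \<Longrightarrow> {\<one>, x} \<in> carrier P"
  by (simp add: carrier_Pfin1_iff)

lemma mult_one_P [simp]: "X \<in> carrier P \<Longrightarrow> X \<otimes>\<^bsub>P\<^esub> {\<one>} = X"
  using P.r_one by simp

lemma one_mult_P [simp]: "X \<in> carrier P \<Longrightarrow> {\<one>} \<otimes>\<^bsub>P\<^esub> X = X"
  using P.l_one by simp

lemma subset_mult_left: "X \<in> carrier P \<Longrightarrow> Y \<in> carrier P \<Longrightarrow> X \<subseteq> X \<otimes>\<^bsub>P\<^esub> Y"
  by (force simp: carrier_Pfin1_iff mult_Pfin1)

lemma subset_mult_right: "X \<in> carrier P \<Longrightarrow> Y \<in> carrier P \<Longrightarrow> Y \<subseteq> X \<otimes>\<^bsub>P\<^esub> Y"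
  by (force simp: carrier_Pfin1_iff mult_Pfin1)

lemma mdvd_P_imp_subset:
  assumes "X \<in> carrier P" "mdvd P X Y"
  shows "X \<subseteq> Y"
proof -
  obtain U V where "U \<in> carrier P" "V \<in> carrier P" "Y = U \<otimes>\<^bsub>P\<^esub> X \<otimes>\<^bsub>P\<^esub> V"
    using assms(2) unfolding mdvd_def by blast
  moreover have "X \<subseteq> U \<otimes>\<^bsub>P\<^esub> X"
    using \<open>U \<in> carrier P\<close> assms(1) by (rule subset_mult_right)
  ultimately show ?thesis
    using assms(1) subset_mult_left[of "U \<otimes>\<^bsub>P\<^esub> X" V] by blast
qed

lemma mdvd_mult_left: "X \<in> carrier P \<Longrightarrow> Y \<in> carrier P \<Longrightarrow> mdvd P X (X \<otimes>\<^bsub>P\<^esub> Y)"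
  unfolding mdvd_def by (metis P.l_one P.one_closed)

lemma mdvd_mult_right: "X \<in> carrier P \<Longrightarrow> Y \<in> carrier P \<Longrightarrow> mdvd P Y (X \<otimes>\<^bsub>P\<^esub> Y)"
  unfolding mdvd_def by (metis P.m_closed P.r_one P.one_closed)

lemma massoc_P_iff: "X \<in> carrier P \<Longrightarrow> Y \<in> carrier P \<Longrightarrow> massoc P X Y \<longleftrightarrow> X = Y"
  unfolding massoc_def
  by (metis P.r_one P.one_closed mdvd_P_imp_subset mdvd_mult_left subset_antisym)

lemma unit_divisor_P_iff:
  assumes "X \<in> carrier P"
  shows "unit_divisor P X \<longleftrightarrow> X = {\<one>}"
proof
  assume "unit_divisor P X"
  then show "X = {\<one>}"
    unfolding unit_divisor_def using assms mdvd_P_imp_subset one_mem_P by fastforce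
next
  assume "X = {\<one>}"
  then show "unit_divisor P X"
    unfolding unit_divisor_def using P.one_closed mdvd_mult_left P.l_one by (metis one_Pfin1)
qed

lemma proper_mdvd_P_iff:
  "X \<in> carrier P \<Longrightarrow> Y \<in> carrier P \<Longrightarrow> mdvd P X Y \<Longrightarrow> proper_mdvd P X Y \<longleftrightarrow> X \<noteq> Y"
  by (metis massoc_P_iff massoc_def proper_mdvd_def)

lemma irreducible_P_iff:
  "irreducible_m P A \<longleftrightarrow> A \<in> carrier P \<and> A \<noteq> {\<one>} \<and>
     (\<forall>X\<in>carrier P. \<forall>Y\<in>carrier P. X \<otimes>\<^bsub>P\<^esub> Y = A \<longrightarrow> X = {\<one>} \<or> Y = {\<one>} \<or> X = A \<or> Y = A)"
proof (cases "A \<in> carrier P")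
  case True
  have nontrivial_factors_iff:
    "(\<not> unit_divisor P X \<and> \<not> unit_divisor P Y \<and> proper_mdvd P X A \<and> proper_mdvd P Y A)
      \<longleftrightarrow> \<not> (X = {\<one>} \<or> Y = {\<one>} \<or> X = A \<or> Y = A)"
    if XY: "X \<in> carrier P" "Y \<in> carrier P" "X \<otimes>\<^bsub>P\<^esub> Y = A" for X Y
  proof -
    have "proper_mdvd P X A \<longleftrightarrow> X \<noteq> A" "proper_mdvd P Y A \<longleftrightarrow> Y \<noteq> A"
      using proper_mdvd_P_iff[OF XY(1) True] proper_mdvd_P_iff[OF XY(2) True]
        mdvd_mult_left[OF XY(1,2)] mdvd_mult_right[OF XY(1,2)] XY(3) by simp_all
    then show ?thesis
      using unit_divisor_P_iff[OF XY(1)] unit_divisor_P_iff[OF XY(2)] by simp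
  qed
  show ?thesis
    unfolding irreducible_m_def unit_divisor_P_iff[OF True]
    using nontrivial_factors_iff by (metis (no_types, lifting))
qed (simp add: irreducible_m_def)

lemma irreducible_P_pair:
  assumes "x \<in> carrier H" "x \<noteq> \<one>"
  shows "irreducible_m P {\<one>, x}"
proof -
  have "X = {\<one>} \<or> X = {\<one>, x}" if "X \<in> carrier P" "X \<subseteq> {\<one>, x}" for X
    using that one_mem_P by blast
  moreover have "{\<one>, x} \<noteq> {\<one>}"
    using assms(2) by auto
  ultimately show ?thesis
    unfolding irreducible_P_iff using pair_in_P[OF assms(1)] subset_mult_left by blast
qed

lemma subset_word_prod: "set as \<subseteq> carrier P \<Longrightarrow> A \<in> set as \<Longrightarrow> A \<subseteq> word_prod P as"
  using P.mdvd_word_prod mdvd_P_imp_subset by blast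

lemma word_le_P_iff:
  assumes "set as \<subseteq> carrier P" "set bs \<subseteq> carrier P"
  shows "word_le P as bs \<longleftrightarrow> mset as \<subseteq># mset bs"
proof
  assume "word_le P as bs"
  then obtain ps cs where ps: "mset ps = mset bs" and cs: "subseq cs ps" "list_all2 (massoc P) as cs"
    unfolding word_le_def by blast
  have "set cs \<subseteq> carrier P"
    using subseq_imp_mset_subseteq[OF cs(1)] ps assms(2) by (metis set_mset_mono set_mset_mset order.trans)
  have "list_all2 (=) as cs"
    using cs(2) by (rule list.rel_mono_strong) (use assms(1) \<open>set cs \<subseteq> carrier P\<close> massoc_P_iff in blast)
  then have "as = cs"
    by (simp add: list.rel_eq)
  then show "mset as \<subseteq># mset bs"
    using subseq_imp_mset_subseteq[OF cs(1)] ps by simp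
next
  assume "mset as \<subseteq># mset bs"
  moreover obtain xs where "mset xs = mset bs - mset as"
    using ex_mset by blast
  ultimately have "mset (as @ xs) = mset bs"
    by simp
  moreover have "list_all2 (massoc P) as as"
    using assms(1) massoc_P_iff by (auto intro: list.rel_refl_strong)
  moreover have "subseq as (as @ xs)"
    using subseq_append'[of as "[]" xs] by simp
  ultimately show "word_le P as bs"
    unfolding word_le_def by blast
qed

lemma word_equiv_P_iff:
  "set as \<subseteq> carrier P \<Longrightarrow> set bs \<subseteq> carrier P \<Longrightarrow> word_equiv P as bs \<longleftrightarrow> mset as = mset bs"
  unfolding word_equiv_def by (simp add: word_le_P_iff subset_mset.eq_iff)

lemma minimal_factorization_P_iff:
  "minimal_factorization P X as \<longleftrightarrow>
     factorization P X as \<and> (\<forall>bs. factorization P X bs \<longrightarrow> \<not> mset bs \<subset># mset as)"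
proof -
  have "word_le P bs as \<and> \<not> word_le P as bs \<longleftrightarrow> mset bs \<subset># mset as"
    if "factorization P X as" "factorization P X bs" for bs
  proof -
    have "set as \<subseteq> carrier P" "set bs \<subseteq> carrier P"
      using that by (simp_all add: factorization_subset_carrier)
    then show ?thesis
      by (simp add: word_le_P_iff subset_mset.less_le_not_le)
  qed
  then show ?thesis
    unfolding minimal_factorization_def by blast
qed

lemma factorable_P: "factorable P"
proof -
  have "\<exists>as. factorization P X as" if "X \<in> carrier P" "X \<noteq> {\<one>}" for X
    using that
  proof (induction "card X" arbitrary: X rule: less_induct)
    case less
    show ?case
    proof (cases "irreducible_m P X")
      case True
      then have "factorization P X [X]"
        using less.prems by (simp add: factorization_def)
      then show ?thesis by blast
    next
      case False
      then obtain Y Z where YZ: "Y \<in> carrier P" "Z \<in> carrier P" "Y \<otimes>\<^bsub>P\<^esub> Z = X"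
        and nontrivial: "Y \<noteq> {\<one>}" "Z \<noteq> {\<one>}" "Y \<noteq> X" "Z \<noteq> X"
        using less.prems unfolding irreducible_P_iff by blast
      have "Y \<subset> X" "Z \<subset> X"
        using subset_mult_left[OF YZ(1,2)] subset_mult_right[OF YZ(1,2)] YZ(3) nontrivial by auto
      then have "card Y < card X" "card Z < card X"
        using less.prems(1) by (auto intro: psubset_card_mono simp: carrier_Pfin1_iff)
      then obtain bs cs where bs: "factorization P Y bs" and cs: "factorization P Z cs"
        using less.hyps YZ(1,2) nontrivial(1,2) by meson
      then have "factorization P X (bs @ cs)"
        using YZ(3) factorization_subset_carrier[OF bs] factorization_subset_carrier[OF cs]
        by (auto simp: factorization_def P.word_prod_append)
      then show ?thesis by blast
    qed
  qed
  then show ?thesis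
    unfolding factorable_def using unit_divisor_P_iff by blast
qed

lemma minimal_factorization_below:
  "factorization P X bs \<Longrightarrow> \<exists>cs. minimal_factorization P X cs \<and> mset cs \<subseteq># mset bs"
proof (induction "size bs" arbitrary: bs rule: less_induct)
  case less
  show ?case
  proof (cases "minimal_factorization P X bs")
    case False
    then obtain ds where ds: "factorization P X ds" "mset ds \<subset># mset bs"
      using less.prems minimal_factorization_P_iff by blast
    then have "size ds < size bs"
      using mset_subset_size by fastforce
    then obtain cs where "minimal_factorization P X cs" "mset cs \<subseteq># mset ds"
      using less.hyps ds(1) by blast
    then show ?thesis
      using subset_mset.order_trans[OF _ subset_mset.less_imp_le[OF ds(2)]] by blast
  qed auto
qed

lemma minimal_factorization_pair:
  assumes f: "factorization P X [A, B]" and "X \<noteq> A" "X \<noteq> B"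
  shows "minimal_factorization P X [A, B]"
proof -
  have AB: "A \<in> carrier P" "B \<in> carrier P"
    using factorization_subset_carrier[OF f] by auto
  have "A \<otimes>\<^bsub>P\<^esub> B = X" "A \<noteq> {\<one>}"
    using f AB by (simp_all add: factorization_def irreducible_P_iff)
  then have "X \<noteq> {\<one>}"
    using subset_mult_left[OF AB] one_mem_P[OF AB(1)] by blast
  have "\<not> mset bs \<subset># {#A, B#}" if "factorization P X bs" for bs
  proof
    assume smaller: "mset bs \<subset># {#A, B#}"
    have "length bs < 2"
      using mset_subset_size[OF smaller] by simp
    moreover have "set bs \<subseteq> {A, B}"
      using set_mset_mono[OF subset_mset.less_imp_le[OF smaller]] by simp
    ultimately consider "bs = []" | "bs = [A]" | "bs = [B]"
      by (cases bs) auto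
    then show False
      using that \<open>X \<noteq> {\<one>}\<close> assms AB by cases (simp_all add: factorization_def)
  qed
  then show ?thesis
    using f minimal_factorization_P_iff by auto
qed

lemma UmF_minimal_factors_subset:
  assumes "UmF P" "minimal_factorization P X as" "factorization P X bs"
  shows "set as \<subseteq> set bs"
proof -
  obtain cs where cs: "minimal_factorization P X cs" "mset cs \<subseteq># mset bs"
    using minimal_factorization_below assms(3) by blast
  have "X \<in> carrier P"
    using assms(3) P.factorization_closed by blast
  with assms(1,2) cs(1) have "word_equiv P as cs"
    unfolding UmF_def by blast
  moreover have "set as \<subseteq> carrier P" "set cs \<subseteq> carrier P"
    using factorization_subset_carrier[OF minimal_factorization_imp_factorization[OF assms(2)]]
      factorization_subset_carrier[OF minimal_factorization_imp_factorization[OF cs(1)]] .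
  ultimately have "mset as = mset cs"
    by (simp add: word_equiv_P_iff)
  then have "set as = set cs"
    by (metis set_mset_mset)
  also have "\<dots> \<subseteq> set bs"
    using set_mset_mono[OF cs(2)] by simp
  finally show ?thesis .
qed

section \<open>Consequences of unique minimal factorization\<close>

lemma pair_mult_left:
  assumes "a \<in> carrier H" "Y \<subseteq> carrier H"
  shows "{\<one>, a} \<otimes>\<^bsub>P\<^esub> Y = Y \<union> (\<lambda>y. a \<otimes> y) ` Y"
  using assms by (force simp: mult_Pfin1)

lemma pair_mult_right:
  assumes "a \<in> carrier H" "Y \<subseteq> carrier H"
  shows "Y \<otimes>\<^bsub>P\<^esub> {\<one>, a} = Y \<union> (\<lambda>y. y \<otimes> a) ` Y"
  using assms by (force simp: mult_Pfin1)

lemma pair_mult_pair: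
  "a \<in> carrier H \<Longrightarrow> b \<in> carrier H \<Longrightarrow> {\<one>, a} \<otimes>\<^bsub>P\<^esub> {\<one>, b} = {\<one>, a, b, a \<otimes> b}"
  by (subst pair_mult_left) auto

lemma UmF_pair_product_factors:
  assumes "UmF P" "a \<in> carrier H" "b \<in> carrier H" "a \<noteq> \<one>" "b \<noteq> \<one>"
    and "{\<one>, a, b, a \<otimes> b} \<noteq> {\<one>, a}" "{\<one>, a, b, a \<otimes> b} \<noteq> {\<one>, b}"
    and "factorization P {\<one>, a, b, a \<otimes> b} bs"
  shows "{\<one>, a} \<in> set bs \<and> {\<one>, b} \<in> set bs"
proof -
  have "factorization P {\<one>, a, b, a \<otimes> b} [{\<one>, a}, {\<one>, b}]"
    using assms(2-5) by (simp add: factorization_def irreducible_P_pair pair_in_P pair_mult_pair)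
  then have "minimal_factorization P {\<one>, a, b, a \<otimes> b} [{\<one>, a}, {\<one>, b}]"
    using assms(6,7) by (rule minimal_factorization_pair)
  from UmF_minimal_factors_subset[OF assms(1) this assms(8)] show ?thesis
    by simp
qed

lemma UmF_square_cases:
  assumes U: "UmF P" and x: "x \<in> carrier H"
  shows "x \<otimes> x = \<one> \<or> x \<otimes> x = x"
proof (rule ccontr)
  assume "\<not> ?thesis"
  then have sq: "x \<otimes> x \<noteq> \<one>" "x \<otimes> x \<noteq> x" and "x \<noteq> \<one>"
    by auto
  \<comment> \<open>\<open>{1,x}\<^sup>3 = {1,x}{1,x\<^sup>2}\<close>, but the cube does not use the factor \<open>{1,x\<^sup>2}\<close>\<close>
  have "{\<one>, x} \<otimes>\<^bsub>P\<^esub> {\<one>, x} = {\<one>, x, x \<otimes> x}"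
    using pair_mult_pair[OF x x] by auto
  then have "word_prod P [{\<one>, x}, {\<one>, x}, {\<one>, x}] = {\<one>, x} \<otimes>\<^bsub>P\<^esub> {\<one>, x, x \<otimes> x}"
    using x by (simp add: pair_in_P)
  also have "\<dots> = {\<one>, x, x \<otimes> x, x \<otimes> (x \<otimes> x)}"
    using x by (subst pair_mult_left) auto
  finally have "factorization P {\<one>, x, x \<otimes> x, x \<otimes> (x \<otimes> x)} [{\<one>, x}, {\<one>, x}, {\<one>, x}]"
    using irreducible_P_pair[OF x \<open>x \<noteq> \<one>\<close>] by (simp add: factorization_def)
  moreover have "x \<otimes> x \<notin> {\<one>, x}" "x \<notin> {\<one>, x \<otimes> x}"
    using sq \<open>x \<noteq> \<one>\<close> by auto
  then have "{\<one>, x, x \<otimes> x, x \<otimes> (x \<otimes> x)} \<noteq> {\<one>, x}"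
    and "{\<one>, x, x \<otimes> x, x \<otimes> (x \<otimes> x)} \<noteq> {\<one>, x \<otimes> x}"
    by (metis insertCI)+
  ultimately have "{\<one>, x \<otimes> x} \<in> set [{\<one>, x}, {\<one>, x}, {\<one>, x}]"
    using UmF_pair_product_factors[OF U x m_closed[OF x x] \<open>x \<noteq> \<one>\<close> sq(1)] by blast
  then show False
    using sq by (auto simp: doubleton_eq_iff)
qed

lemma UmF_unit_square: "UmF P \<Longrightarrow> u \<in> Units H \<Longrightarrow> u \<otimes> u = \<one>"
  using UmF_square_cases Units_l_cancel[of u u \<one>] by (metis Units_closed one_closed r_one)

lemma UmF_involution_absorbs_left:
  assumes U: "UmF P" and u: "u \<in> carrier H" "u \<otimes> u = \<one>" "u \<noteq> \<one>"
    and y: "y \<in> carrier H" "y \<noteq> \<one>" "y \<noteq> u"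
  shows "u \<otimes> y = y"
proof (rule ccontr)
  assume "u \<otimes> y \<noteq> y"
  \<comment> \<open>\<open>{1,u}{1,uy} = {1,u}{1,y}\<close> since \<open>u(uy) = y\<close>, but \<open>{1,y}\<close> is not a factor on the left\<close>
  define z where "z = u \<otimes> y"
  have z: "z \<in> carrier H" "u \<otimes> z = y"
    using u y by (simp_all add: z_def m_assoc[symmetric])
  then have "z \<noteq> \<one>"
    using u y by auto
  have "word_prod P [{\<one>, u}, {\<one>, z}] = {\<one>, u, y, u \<otimes> y}"
    using u z by (auto simp: pair_in_P pair_mult_pair z_def)
  then have "factorization P {\<one>, u, y, u \<otimes> y} [{\<one>, u}, {\<one>, z}]"
    using irreducible_P_pair u z \<open>z \<noteq> \<one>\<close> by (simp add: factorization_def)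
  moreover have "{\<one>, u, y, u \<otimes> y} \<noteq> {\<one>, u}" "{\<one>, u, y, u \<otimes> y} \<noteq> {\<one>, y}"
    using u(3) y(2,3) by blast+
  moreover have "{\<one>, y} \<notin> set [{\<one>, u}, {\<one>, z}]"
    using y(2,3) \<open>u \<otimes> y \<noteq> y\<close> by (auto simp: z_def doubleton_eq_iff)
  ultimately show False
    using UmF_pair_product_factors[OF U u(1) y(1) u(3) y(2)] by blast
qed

lemma UmF_involution_absorbs_right:
  assumes U: "UmF P" and u: "u \<in> carrier H" "u \<otimes> u = \<one>" "u \<noteq> \<one>"
    and y: "y \<in> carrier H" "y \<noteq> \<one>" "y \<noteq> u"
  shows "y \<otimes> u = y"
proof (rule ccontr)
  assume "y \<otimes> u \<noteq> y"
  define z where "z = y \<otimes> u"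
  have z: "z \<in> carrier H" "z \<otimes> u = y"
    using u y by (simp_all add: z_def m_assoc)
  then have "z \<noteq> \<one>"
    using u y by auto
  have "word_prod P [{\<one>, z}, {\<one>, u}] = {\<one>, y, u, y \<otimes> u}"
    using u z by (auto simp: pair_in_P pair_mult_pair z_def)
  then have "factorization P {\<one>, y, u, y \<otimes> u} [{\<one>, z}, {\<one>, u}]"
    using irreducible_P_pair u z \<open>z \<noteq> \<one>\<close> by (simp add: factorization_def)
  moreover have "{\<one>, y, u, y \<otimes> u} \<noteq> {\<one>, y}" "{\<one>, y, u, y \<otimes> u} \<noteq> {\<one>, u}"
    using u(3) y(2,3) by blast+
  moreover have "{\<one>, y} \<notin> set [{\<one>, z}, {\<one>, u}]"
    using y(2,3) \<open>y \<otimes> u \<noteq> y\<close> by (auto simp: z_def doubleton_eq_iff)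
  ultimately show False
    using UmF_pair_product_factors[OF U y(1) u(1) y(2) u(3)] by blast
qed

lemma UmF_Units_subset:
  assumes U: "UmF P" and u: "u \<in> Units H" "u \<noteq> \<one>"
  shows "Units H \<subseteq> {\<one>, u}"
proof
  fix v assume v: "v \<in> Units H"
  show "v \<in> {\<one>, u}"
  proof (rule ccontr)
    assume "v \<notin> {\<one>, u}"
    then have "u \<otimes> v = \<one> \<otimes> v"
      using UmF_involution_absorbs_left[OF U Units_closed[OF u(1)] UmF_unit_square[OF U u(1)] u(2)
          Units_closed[OF v]] Units_closed[OF v] by simp
    then have "(u \<otimes> v) \<otimes> inv v = (\<one> \<otimes> v) \<otimes> inv v"
      by simp
    then show False
      using u v Units_closed[OF u(1)] Units_closed[OF v] by (simp add: m_assoc)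
  qed
qed

lemma UmF_card_Units:
  assumes "UmF P"
  shows "finite (Units H) \<and> card (Units H) \<le> 2"
proof -
  obtain u where "Units H \<subseteq> {\<one>, u}"
    using UmF_Units_subset[OF assms] by blast
  moreover have "card {\<one>, u} \<le> 2"
    by (simp add: card_insert_if)
  ultimately show ?thesis
    using finite_subset card_mono by (metis finite.emptyI finite.insertI order.trans)
qed

lemma UmF_unit_mult_nonunit:
  assumes U: "UmF P" and u: "u \<in> Units H" and y: "y \<in> carrier H - Units H"
  shows "u \<otimes> y = y \<and> y \<otimes> u = y"
proof (cases "u = \<one>")
  case False
  moreover have "y \<noteq> \<one>" "y \<noteq> u"
    using u y by auto
  ultimately show ?thesis
    using UmF_involution_absorbs_left UmF_involution_absorbs_right UmF_unit_square U u y by blast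
qed (use y in simp)

lemma UmF_nonunit_idem:
  assumes U: "UmF P" and x: "x \<in> carrier H - Units H"
  shows "x \<otimes> x = x"
proof -
  have "x \<otimes> x \<noteq> \<one>"
    using x unfolding Units_def by blast
  then show ?thesis
    using UmF_square_cases U x by blast
qed

lemma UmF_nonunits_mult_closed:
  assumes U: "UmF P" and x: "x \<in> carrier H - Units H" and y: "y \<in> carrier H - Units H"
  shows "x \<otimes> y \<notin> Units H"
proof
  assume w: "x \<otimes> y \<in> Units H"
  have "inv (x \<otimes> y) \<otimes> x = x"
    using UmF_unit_mult_nonunit[OF U Units_inv_Units[OF w] x] by blast
  then have "x \<otimes> y = inv (x \<otimes> y) \<otimes> x \<otimes> y"
    by simp
  also have "\<dots> = \<one>"
    using w x y by (simp add: m_assoc)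
  finally have "x \<otimes> y = \<one>" .
  then have "x = \<one>"
    using UmF_nonunit_idem[OF U x] x y by (metis DiffD1 m_assoc r_one)
  then show False
    using x by simp
qed

lemma irreducible_P_triple:
  assumes x: "x \<in> carrier H" "x \<noteq> \<one>" "x \<otimes> x = x" and y: "y \<in> carrier H" "y \<noteq> \<one>" "y \<otimes> y = y"
    and "x \<noteq> y" "x \<otimes> y \<notin> {\<one>, x, y}" "y \<otimes> x \<notin> {\<one>, x, y}"
  shows "irreducible_m P {\<one>, x, y}"
proof -
  have idem: "{\<one>, z} \<otimes>\<^bsub>P\<^esub> {\<one>, z} = {\<one>, z}" if "z \<in> carrier H" "z \<otimes> z = z" for z
    using pair_mult_pair[OF that(1) that(1)] that(2) by auto
  have "B = {\<one>} \<or> C = {\<one>} \<or> B = {\<one>, x, y} \<or> C = {\<one>, x, y}"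
    if BC: "B \<in> carrier P" "C \<in> carrier P" "B \<otimes>\<^bsub>P\<^esub> C = {\<one>, x, y}" for B C
  proof (rule ccontr)
    assume "\<not> ?thesis"
    moreover have "B \<subseteq> {\<one>, x, y}" "C \<subseteq> {\<one>, x, y}" "\<one> \<in> B" "\<one> \<in> C"
      using subset_mult_left[OF BC(1,2)] subset_mult_right[OF BC(1,2)] BC one_mem_P by auto
    ultimately have "B \<in> {{\<one>, x}, {\<one>, y}}" "C \<in> {{\<one>, x}, {\<one>, y}}"
      by blast+
    then show False
      using BC(3) idem x y assms(7-9) mult_Pfin1_memI[of x B y C H] mult_Pfin1_memI[of y B x C H]
      by (auto simp: doubleton_eq_iff)
  qed
  moreover have "{\<one>, x, y} \<in> carrier P" "{\<one>, x, y} \<noteq> {\<one>}"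
    using x y by (auto simp: carrier_Pfin1_iff)
  ultimately show ?thesis
    unfolding irreducible_P_iff by blast
qed

lemma UmF_nonunits_product_in_pair:
  assumes U: "UmF P" and x: "x \<in> carrier H - Units H" and y: "y \<in> carrier H - Units H"
  shows "x \<otimes> y \<in> {x, y} \<or> y \<otimes> x \<in> {x, y}"
proof (rule ccontr)
  assume "\<not> ?thesis"
  then have "x \<otimes> y \<notin> {x, y}" "y \<otimes> x \<notin> {x, y}"
    by auto
  moreover have "x \<otimes> y \<noteq> \<one>" "y \<otimes> x \<noteq> \<one>"
    using UmF_nonunits_mult_closed[OF U] x y by (metis Units_one_closed)+
  ultimately have "x \<otimes> y \<notin> {\<one>, x, y}" "y \<otimes> x \<notin> {\<one>, x, y}"
    by auto
  moreover have xx: "x \<otimes> x = x" and yy: "y \<otimes> y = y"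
    using UmF_nonunit_idem[OF U] x y by auto
  moreover have "x \<noteq> \<one>" "y \<noteq> \<one>" "x \<noteq> y"
    using x y \<open>x \<otimes> y \<notin> {x, y}\<close> xx by auto
  ultimately have T: "irreducible_m P {\<one>, x, y}"
    using irreducible_P_triple x y by blast
  have "word_prod P [{\<one>, x, y}, {\<one>, y}] = {\<one>, x, y} \<otimes>\<^bsub>P\<^esub> {\<one>, y}"
    using x y by (simp add: carrier_Pfin1_iff)
  also have "\<dots> = {\<one>, x, y, x \<otimes> y}"
    using x y yy by (subst pair_mult_right) auto
  finally have "factorization P {\<one>, x, y, x \<otimes> y} [{\<one>, x, y}, {\<one>, y}]"
    using T irreducible_P_pair y \<open>y \<noteq> \<one>\<close> by (simp add: factorization_def)
  moreover have "{\<one>, x, y, x \<otimes> y} \<noteq> {\<one>, x}" "{\<one>, x, y, x \<otimes> y} \<noteq> {\<one>, y}"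
    using \<open>x \<noteq> \<one>\<close> \<open>y \<noteq> \<one>\<close> \<open>x \<noteq> y\<close> by (metis insertCI insertE singletonD)+
  ultimately have "{\<one>, x} \<in> set [{\<one>, x, y}, {\<one>, y}]"
    using UmF_pair_product_factors[OF U _ _ \<open>x \<noteq> \<one>\<close> \<open>y \<noteq> \<one>\<close>] x y by blast
  then show False
    using \<open>x \<noteq> \<one>\<close> \<open>y \<noteq> \<one>\<close> \<open>x \<noteq> y\<close> by (auto simp: doubleton_eq_iff)
qed

end

section \<open>Restriction to a submonoid\<close>

locale power_submonoid = power_monoid H + submonoid S H
  for H :: "('a, 'b) monoid_scheme" (structure) and S
begin

abbreviation Q where "Q \<equiv> Pfin1 (H\<lparr>carrier := S\<rparr>)"

sublocale Q: power_monoid "H\<lparr>carrier := S\<rparr>"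
  by (rule power_monoid.intro) (rule submonoid_is_monoid[OF monoid_axioms])

lemma carrier_Q_iff: "X \<in> carrier Q \<longleftrightarrow> X \<in> carrier P \<and> X \<subseteq> S"
  using subset by (auto simp: carrier_Pfin1_iff)

lemma mult_Q: "X \<otimes>\<^bsub>Q\<^esub> Y = X \<otimes>\<^bsub>P\<^esub> Y"
  by (simp add: mult_Pfin1)

lemma word_prod_Q: "word_prod Q as = word_prod P as"
  by (induction as) (simp_all add: mult_Q)

lemma irreducible_Q_iff:
  assumes "A \<subseteq> S"
  shows "irreducible_m Q A \<longleftrightarrow> irreducible_m P A"
proof -
  have factors_in_Q: "X \<in> carrier Q" "Y \<in> carrier Q"
    if "X \<in> carrier P" "Y \<in> carrier P" "X \<otimes>\<^bsub>P\<^esub> Y = A" for X Y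
    using subset_mult_left[OF that(1,2)] subset_mult_right[OF that(1,2)] that assms carrier_Q_iff
    by blast+
  have "A \<in> carrier Q \<longleftrightarrow> A \<in> carrier P"
    using assms carrier_Q_iff by blast
  moreover have
    "(\<forall>X\<in>carrier Q. \<forall>Y\<in>carrier Q. X \<otimes>\<^bsub>P\<^esub> Y = A \<longrightarrow> X = {\<one>} \<or> Y = {\<one>} \<or> X = A \<or> Y = A) \<longleftrightarrow>
     (\<forall>X\<in>carrier P. \<forall>Y\<in>carrier P. X \<otimes>\<^bsub>P\<^esub> Y = A \<longrightarrow> X = {\<one>} \<or> Y = {\<one>} \<or> X = A \<or> Y = A)"
    using factors_in_Q carrier_Q_iff by blast
  ultimately show ?thesis
    unfolding Q.irreducible_P_iff[simplified] irreducible_P_iff mult_Q by blast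
qed

lemma factorization_Q_iff:
  assumes "X \<subseteq> S"
  shows "factorization Q X as \<longleftrightarrow> factorization P X as"
proof
  assume f: "factorization Q X as"
  have "A \<subseteq> S" if "A \<in> set as" for A
    using subsetD[OF factorization_subset_carrier[OF f] that] by (simp add: carrier_Q_iff)
  then show "factorization P X as"
    using f irreducible_Q_iff by (auto simp: factorization_def word_prod_Q)
next
  assume f: "factorization P X as"
  have "A \<subseteq> S" if "A \<in> set as" for A
  proof -
    have "A \<subseteq> word_prod P as"
      using subset_word_prod[OF factorization_subset_carrier[OF f] that] .
    then show ?thesis
      using f assms by (simp add: factorization_def)
  qed
  then show "factorization Q X as"
    using f irreducible_Q_iff by (auto simp: factorization_def word_prod_Q)
qed

lemma minimal_factorization_Q_iff:
  "X \<subseteq> S \<Longrightarrow> minimal_factorization Q X as \<longleftrightarrow> minimal_factorization P X as"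
  by (simp add: Q.minimal_factorization_P_iff minimal_factorization_P_iff factorization_Q_iff)

lemma UmF_Q:
  assumes "UmF P"
  shows "UmF Q"
  unfolding UmF_def
proof (intro conjI ballI allI impI Q.factorable_P)
  fix X as bs
  assume X: "X \<in> carrier Q" and min: "minimal_factorization Q X as \<and> minimal_factorization Q X bs"
  then have "X \<subseteq> S" "X \<in> carrier P"
    using carrier_Q_iff by auto
  then have "word_equiv P as bs"
    using assms min minimal_factorization_Q_iff unfolding UmF_def by blast
  moreover have "set as \<subseteq> carrier Q" "set bs \<subseteq> carrier Q"
    using min by (metis factorization_subset_carrier minimal_factorization_imp_factorization)+
  moreover from calculation(2,3) have "set as \<subseteq> carrier P" "set bs \<subseteq> carrier P"
    by (auto simp: carrier_Q_iff)
  ultimately show "word_equiv Q as bs"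
    by (simp add: word_equiv_P_iff Q.word_equiv_P_iff)
qed

end

section \<open>Removing an involutive unit\<close>

locale power_monoid_involution = power_monoid +
  fixes u
  assumes u_closed: "u \<in> carrier H" and u_neq_one: "u \<noteq> \<one>" and u_square: "u \<otimes> u = \<one>"
    and u_absorbed: "\<And>y. y \<in> carrier H \<Longrightarrow> y \<noteq> \<one> \<Longrightarrow> y \<noteq> u \<Longrightarrow> u \<otimes> y = y \<and> y \<otimes> u = y"
    and mult_neq_u: "\<And>x y. x \<in> carrier H \<Longrightarrow> y \<in> carrier H \<Longrightarrow> x \<noteq> u \<Longrightarrow> y \<noteq> u \<Longrightarrow> x \<otimes> y \<noteq> u"
begin

sublocale N: power_submonoid H "carrier H - {u}"
  by unfold_locales (use u_neq_one mult_neq_u in auto)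

declare N.mem_carrier [simp del] \<comment> \<open>for \<open>S = carrier H - {u}\<close> this rule makes the simplifier loop\<close>

text \<open>Sending \<open>u\<close> to \<open>\<one>\<close> is a homomorphism \<open>H \<rightarrow> H - {u}\<close>; on sets containing \<open>\<one>\<close> its image
  map is \<open>X \<mapsto> X - {u}\<close>.\<close>

definition retract :: "'a \<Rightarrow> 'a" where
  "retract x = (if x = u then \<one> else x)"

lemma retract_closed: "x \<in> carrier H \<Longrightarrow> retract x \<in> carrier H"
  by (simp add: retract_def)

lemma retract_mult_u:
  assumes "x \<in> carrier H"
  shows "retract (u \<otimes> x) = retract x" "retract (x \<otimes> u) = retract x"
proof -
  consider "x = u" | "x = \<one>" | "x \<noteq> u" "x \<noteq> \<one>"
    by blast
  then have "u \<otimes> x = x \<and> x \<otimes> u = x \<or> retract (u \<otimes> x) = \<one> \<and> retract (x \<otimes> u) = \<one> \<and> retract x = \<one>"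
  proof cases
    case 1
    then show ?thesis
      using u_square u_neq_one by (simp add: retract_def)
  next
    case 2
    then show ?thesis
      using u_closed by (simp add: retract_def)
  next
    case 3
    then show ?thesis
      using u_absorbed[OF assms] by simp
  qed
  then show "retract (u \<otimes> x) = retract x" "retract (x \<otimes> u) = retract x"
    by (elim disjE conjE; simp)+
qed

lemma retract_mult:
  assumes "a \<in> carrier H" "b \<in> carrier H"
  shows "retract (a \<otimes> b) = retract a \<otimes> retract b"
proof (cases "a = u \<or> b = u")
  case False
  then show ?thesis
    using assms mult_neq_u by (simp add: retract_def)
next
  case True
  have "retract u = \<one>"
    by (simp add: retract_def)
  with True show ?thesis
    using assms retract_mult_u retract_closed by (elim disjE) simp_all
qed

lemma Diff_u_eq_image_retract:
  assumes "X \<in> carrier P"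
  shows "X - {u} = retract ` X"
proof (intro Set.set_eqI iffI)
  fix x
  assume "x \<in> X - {u}"
  then have "x \<in> X" "retract x = x"
    by (simp_all add: retract_def)
  then show "x \<in> retract ` X"
    by (metis image_eqI)
next
  fix y
  assume "y \<in> retract ` X"
  then obtain x where "x \<in> X" "y = retract x"
    by blast
  then show "y \<in> X - {u}"
    using one_mem_P[OF assms] u_neq_one by (cases "x = u") (simp_all add: retract_def)
qed

lemma retract_image_mult:
  assumes "A \<in> carrier P" "B \<in> carrier P"
  shows "retract ` (A \<otimes>\<^bsub>P\<^esub> B) = retract ` A \<otimes>\<^bsub>P\<^esub> retract ` B"
proof -
  have hom: "retract (a \<otimes> b) = retract a \<otimes> retract b" if "a \<in> A" "b \<in> B" for a b
    using that assms subset_carrier_P retract_mult by blast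
  show ?thesis
  proof (intro Set.set_eqI iffI)
    fix z
    assume "z \<in> retract ` (A \<otimes>\<^bsub>P\<^esub> B)"
    then obtain a b where "a \<in> A" "b \<in> B" "z = retract (a \<otimes> b)"
      by (auto simp: mem_mult_Pfin1_iff)
    then show "z \<in> retract ` A \<otimes>\<^bsub>P\<^esub> retract ` B"
      using hom by (simp add: mult_Pfin1_memI)
  next
    fix z
    assume "z \<in> retract ` A \<otimes>\<^bsub>P\<^esub> retract ` B"
    then obtain a b where "a \<in> A" "b \<in> B" "z = retract a \<otimes> retract b"
      by (auto simp: mem_mult_Pfin1_iff)
    then show "z \<in> retract ` (A \<otimes>\<^bsub>P\<^esub> B)"
      using hom by (metis image_eqI mult_Pfin1_memI)
  qed
qed

lemma Diff_u_mult:
  assumes "A \<in> carrier P" "B \<in> carrier P"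
  shows "(A \<otimes>\<^bsub>P\<^esub> B) - {u} = (A - {u}) \<otimes>\<^bsub>P\<^esub> (B - {u})"
  using retract_image_mult[OF assms] assms P.m_closed by (simp add: Diff_u_eq_image_retract)

lemma u_mem_mult_iff:
  assumes "A \<in> carrier P" "B \<in> carrier P"
  shows "u \<in> A \<otimes>\<^bsub>P\<^esub> B \<longleftrightarrow> u \<in> A \<or> u \<in> B"
proof
  assume "u \<in> A \<otimes>\<^bsub>P\<^esub> B"
  then obtain a b where ab: "a \<in> A" "b \<in> B" "u = a \<otimes> b"
    by (auto simp: mem_mult_Pfin1_iff)
  moreover have "a \<in> carrier H" "b \<in> carrier H"
    using ab assms subset_carrier_P by auto
  ultimately show "u \<in> A \<or> u \<in> B"
    using mult_neq_u by metis
next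
  assume "u \<in> A \<or> u \<in> B"
  then show "u \<in> A \<otimes>\<^bsub>P\<^esub> B"
    using subset_mult_left[OF assms] subset_mult_right[OF assms] by auto
qed

lemma pair_u_mult:
  assumes Z: "Z \<in> carrier P" "u \<notin> Z"
  shows "{\<one>, u} \<otimes>\<^bsub>P\<^esub> Z = insert u Z"
proof -
  have "u \<otimes> z \<in> insert u Z" if "z \<in> Z" for z
  proof (cases "z = \<one>")
    case False
    then have "u \<otimes> z = z"
      using u_absorbed[of z] that Z subset_carrier_P by blast
    then show ?thesis
      using that by simp
  qed (simp add: u_closed)
  moreover have "u \<in> (\<lambda>z. u \<otimes> z) ` Z"
    using one_mem_P[OF Z(1)] u_closed by (metis image_eqI r_one)
  ultimately show ?thesis
    using pair_mult_left[OF u_closed subset_carrier_P[OF Z(1)]] by blast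
qed

lemma irreducible_mem_u_iff:
  assumes irr: "irreducible_m P A"
  shows "u \<in> A \<longleftrightarrow> A = {\<one>, u}"
proof
  assume "u \<in> A"
  have A: "A \<in> carrier P" "A - {u} \<in> carrier P"
    using irr u_neq_one by (auto simp: irreducible_P_iff carrier_Pfin1_iff)
  have "{\<one>, u} \<otimes>\<^bsub>P\<^esub> (A - {u}) = A"
    using pair_u_mult[OF A(2)] \<open>u \<in> A\<close> by auto
  moreover have "{\<one>, u} \<noteq> {\<one>}" "A - {u} \<noteq> A"
    using u_neq_one \<open>u \<in> A\<close> by auto
  ultimately have "A - {u} = {\<one>} \<or> {\<one>, u} = A"
    using irr A pair_in_P[OF u_closed] unfolding irreducible_P_iff by blast
  then show "A = {\<one>, u}"
    using \<open>u \<in> A\<close> by auto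
qed simp

lemma u_mem_word_prod_iff:
  "\<forall>a\<in>set as. irreducible_m P a \<Longrightarrow> u \<in> word_prod P as \<longleftrightarrow> {\<one>, u} \<in> set as"
proof (induction as)
  case (Cons a as)
  have "a \<in> carrier P" "word_prod P as \<in> carrier P"
    using irreducibles_subset_carrier[OF Cons.prems] P.word_prod_closed by auto
  then show ?case
    using Cons irreducible_mem_u_iff[of a] by (auto simp: u_mem_mult_iff)
qed (use u_neq_one in simp)

lemma word_prod_Diff_u:
  "\<forall>a\<in>set as. irreducible_m P a \<Longrightarrow>
     word_prod P as - {u} = word_prod P (filter (\<lambda>a. u \<notin> a) as)"
proof (induction as)
  case (Cons a as)
  have a: "a \<in> carrier P" and as: "set as \<subseteq> carrier P"
    using irreducibles_subset_carrier[OF Cons.prems] by auto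
  have "word_prod P (a # as) - {u} = (a - {u}) \<otimes>\<^bsub>P\<^esub> (word_prod P as - {u})"
    using Diff_u_mult[OF a P.word_prod_closed[OF as]] by simp
  also have "\<dots> = (a - {u}) \<otimes>\<^bsub>P\<^esub> word_prod P (filter (\<lambda>a. u \<notin> a) as)"
    using Cons by simp
  also have "\<dots> = word_prod P (filter (\<lambda>a. u \<notin> a) (a # as))"
  proof (cases "u \<in> a")
    case True
    then have "a - {u} = {\<one>}"
      using irreducible_mem_u_iff Cons.prems u_neq_one by auto
    moreover have "word_prod P (filter (\<lambda>a. u \<notin> a) as) \<in> carrier P"
      using as by (intro P.word_prod_closed) auto
    ultimately show ?thesis
      using True by simp
  qed simp
  finally show ?case .
qed (use u_neq_one in simp)

lemma word_prod_split_u: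
  assumes "\<forall>a\<in>set as. irreducible_m P a"
  shows "word_prod P as = word_prod P (filter (\<lambda>a. u \<notin> a) as) \<union> (if {\<one>, u} \<in> set as then {u} else {})"
  using word_prod_Diff_u[OF assms] u_mem_word_prod_iff[OF assms] by auto

lemma mset_split_u:
  assumes "\<forall>a\<in>set as. irreducible_m P a"
  shows "mset as = mset (filter (\<lambda>a. u \<notin> a) as) + replicate_mset (count (mset as) {\<one>, u}) {\<one>, u}"
proof -
  have "{#a \<in># mset as. \<not> u \<notin> a#} = {#a \<in># mset as. a = {\<one>, u}#}"
  proof (rule filter_mset_cong0)
    fix a assume "a \<in># mset as"
    then show "(\<not> u \<notin> a) \<longleftrightarrow> a = {\<one>, u}"
      using assms irreducible_mem_u_iff by simp
  qed
  then show ?thesis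
    using multiset_partition[of "mset as" "\<lambda>a. u \<notin> a"] by (simp add: filter_eq_replicate_mset)
qed

lemma count_pair_u_minimal_le_1:
  assumes min: "minimal_factorization P X as"
  shows "count (mset as) {\<one>, u} \<le> 1"
proof (rule ccontr)
  assume "\<not> count (mset as) {\<one>, u} \<le> 1"
  \<comment> \<open>then one copy of \<open>{1,u}\<close> can be dropped without changing the product\<close>
  have irr: "\<forall>a\<in>set as. irreducible_m P a" and X: "word_prod P as = X"
    using minimal_factorization_imp_factorization[OF min] by (simp_all add: factorization_def)
  define ds where "ds = remove1 {\<one>, u} as"
  have "count (mset ds) {\<one>, u} = count (mset as) {\<one>, u} - 1"
    by (simp add: ds_def)
  then have "0 < count (mset ds) {\<one>, u}"
    using \<open>\<not> count (mset as) {\<one>, u} \<le> 1\<close> by linarith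
  then have in_ds: "{\<one>, u} \<in> set ds"
    by simp
  then have in_as: "{\<one>, u} \<in> set as"
    using set_remove1_subset[of "{\<one>, u}" as] by (auto simp: ds_def)
  have irr_ds: "\<forall>a\<in>set ds. irreducible_m P a"
    using irr set_remove1_subset[of "{\<one>, u}" as] unfolding ds_def by blast
  have "word_prod P ds = word_prod P (filter (\<lambda>a. u \<notin> a) ds) \<union> {u}"
    using word_prod_split_u[OF irr_ds] in_ds by simp
  also have "\<dots> = word_prod P (filter (\<lambda>a. u \<notin> a) as) \<union> {u}"
    by (simp add: ds_def filter_remove1)
  also have "\<dots> = X"
    using word_prod_split_u[OF irr] in_as X by simp
  finally have "factorization P X ds"
    using irr_ds by (simp add: factorization_def)
  moreover have "mset ds \<subset># mset as"
    using in_as by (simp add: ds_def mset_subset_diff_self)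
  ultimately show False
    using min minimal_factorization_P_iff by blast
qed

lemma count_pair_u_minimal:
  assumes min: "minimal_factorization P X as"
  shows "count (mset as) {\<one>, u} = (if u \<in> X then 1 else 0)"
proof -
  have irr: "\<forall>a\<in>set as. irreducible_m P a" and X: "word_prod P as = X"
    using minimal_factorization_imp_factorization[OF min] by (simp_all add: factorization_def)
  have mem: "{\<one>, u} \<in> set as \<longleftrightarrow> u \<in> X"
    using u_mem_word_prod_iff[OF irr] X by simp
  show ?thesis
  proof (cases "u \<in> X")
    case True
    then have "0 < count (mset as) {\<one>, u}"
      using mem by simp
    then have "count (mset as) {\<one>, u} = 1"
      using count_pair_u_minimal_le_1[OF min] by linarith
    with True show ?thesis
      by simp
  qed (use mem in simp)
qed

lemma factorization_insert_pair_u: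
  assumes f: "factorization P (X - {u}) cs" and "u \<in> X"
  shows "factorization P X ({\<one>, u} # cs)"
proof -
  have "X - {u} \<in> carrier P"
    using P.factorization_closed[OF f] .
  then have "word_prod P ({\<one>, u} # cs) = insert u (X - {u})"
    using f pair_u_mult by (simp add: factorization_def)
  then show ?thesis
    using f \<open>u \<in> X\<close> irreducible_P_pair[OF u_closed u_neq_one] by (auto simp: factorization_def)
qed

lemma factorization_pad_pair_u:
  assumes min: "minimal_factorization P X as" and cs: "factorization P (X - {u}) cs"
  shows "factorization P X (replicate (count (mset as) {\<one>, u}) {\<one>, u} @ cs)"
proof -
  have "replicate (count (mset as) {\<one>, u}) {\<one>, u} @ cs = (if u \<in> X then {\<one>, u} # cs else cs)"
    using count_pair_u_minimal[OF min] by simp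
  then show ?thesis
    using cs factorization_insert_pair_u by (simp add: factorization_def)
qed

lemma minimal_factorization_filter_u:
  assumes min: "minimal_factorization P X as"
  shows "minimal_factorization N.Q (X - {u}) (filter (\<lambda>a. u \<notin> a) as)"
proof -
  let ?f = "filter (\<lambda>a. u \<notin> a) as"
  have irr: "\<forall>a\<in>set as. irreducible_m P a" and X: "word_prod P as = X"
    using minimal_factorization_imp_factorization[OF min] by (simp_all add: factorization_def)
  have "X \<in> carrier P"
    using P.word_prod_closed irreducibles_subset_carrier[OF irr] X by blast
  have "factorization P (X - {u}) ?f"
    using word_prod_Diff_u[OF irr] irr X by (simp add: factorization_def)
  moreover have "\<not> mset cs \<subset># mset ?f" if cs: "factorization P (X - {u}) cs" for cs
  proof
    assume smaller: "mset cs \<subset># mset ?f"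
    define k where "k = count (mset as) {\<one>, u}"
    define ds where "ds = replicate k {\<one>, u} @ cs"
    have "factorization P X ds"
      using factorization_pad_pair_u[OF min cs] by (simp add: ds_def k_def)
    moreover have "mset ds \<subset># mset as"
    proof -
      have "mset ds = replicate_mset k {\<one>, u} + mset cs"
        by (simp add: ds_def)
      also have "\<dots> \<subset># replicate_mset k {\<one>, u} + mset ?f"
        using smaller by simp
      also have "\<dots> = mset as"
        using mset_split_u[OF irr] by (simp add: k_def add.commute)
      finally show ?thesis .
    qed
    ultimately show False
      using min minimal_factorization_P_iff by blast
  qed
  ultimately have "minimal_factorization P (X - {u}) ?f"
    using minimal_factorization_P_iff by blast
  moreover have "X - {u} \<subseteq> carrier H - {u}"
    using subset_carrier_P[OF \<open>X \<in> carrier P\<close>] by blast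
  ultimately show ?thesis
    using N.minimal_factorization_Q_iff by blast
qed

lemma UmF_if_UmF_Diff_u:
  assumes UQ: "UmF N.Q"
  shows "UmF P"
  unfolding UmF_def
proof (intro conjI ballI allI impI factorable_P)
  fix X as bs
  assume X: "X \<in> carrier P" and min: "minimal_factorization P X as \<and> minimal_factorization P X bs"
  let ?fa = "filter (\<lambda>a. u \<notin> a) as" and ?fb = "filter (\<lambda>a. u \<notin> a) bs"
  have fa: "minimal_factorization N.Q (X - {u}) ?fa" and fb: "minimal_factorization N.Q (X - {u}) ?fb"
    using min minimal_factorization_filter_u by blast+
  have "X - {u} \<in> carrier N.Q"
    using X u_neq_one by (auto simp: carrier_Pfin1_iff)
  then have "word_equiv N.Q ?fa ?fb"
    using UQ fa fb unfolding UmF_def by blast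
  moreover have "set ?fa \<subseteq> carrier N.Q" "set ?fb \<subseteq> carrier N.Q"
    using factorization_subset_carrier[OF minimal_factorization_imp_factorization[OF fa]]
      factorization_subset_carrier[OF minimal_factorization_imp_factorization[OF fb]] .
  ultimately have "mset ?fa = mset ?fb"
    by (simp add: N.Q.word_equiv_P_iff)
  moreover have irr: "\<forall>a\<in>set as. irreducible_m P a" "\<forall>a\<in>set bs. irreducible_m P a"
    using min by (simp_all add: minimal_factorization_def factorization_def)
  ultimately have "mset as = mset bs"
    using mset_split_u count_pair_u_minimal min by metis
  then show "word_equiv P as bs"
    using irreducibles_subset_carrier[OF irr(1)] irreducibles_subset_carrier[OF irr(2)]
    by (simp add: word_equiv_P_iff)
qed

end

lemma (in monoid) Units_eq_pair:
  assumes "finite (Units G)" "card (Units G) \<le> 2" "u \<in> Units G" "u \<noteq> \<one>"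
  shows "Units G = {\<one>, u}"
  using assms by (intro card_seteq[symmetric]) auto

lemma (in monoid) square_eq_one_if_Units_eq_pair:
  assumes "Units G = {\<one>, u}" "u \<noteq> \<one>"
  shows "u \<otimes> u = \<one>"
proof -
  have "inv u \<in> {\<one>, u}" "u \<otimes> inv u = \<one>"
    using assms(1) Units_inv_Units Units_r_inv by blast+
  then have "inv u = u"
    using assms Units_closed by fastforce
  then show ?thesis
    using \<open>u \<otimes> inv u = \<one>\<close> by simp
qed

context power_monoid
begin

lemma UmF_subsemigroup_nonunits: "UmF P \<Longrightarrow> subsemigroup H (carrier H - Units H)"
  unfolding subsemigroup_def using UmF_nonunits_mult_closed by auto

lemma UmF_almost_breakable_nonunits: "UmF P \<Longrightarrow> almost_breakable H (carrier H - Units H)"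
  unfolding almost_breakable_def using UmF_nonunits_product_in_pair by blast

lemma UmF_trivial_ideal_ext: "UmF P \<Longrightarrow> trivial_ideal_ext H"
  unfolding trivial_ideal_ext_def using UmF_unit_mult_nonunit by blast

lemma UmF_nonunit_part:
  assumes "UmF P"
  shows "UmF (Pfin1 (H\<lparr>carrier := (carrier H - Units H) \<union> {\<one>}\<rparr>))"
proof -
  interpret N: power_submonoid H "(carrier H - Units H) \<union> {\<one>}"
    by unfold_locales (use UmF_nonunits_mult_closed[OF assms] in auto)
  show ?thesis
    using N.UmF_Q[OF assms] .
qed

lemma UmF_if_UmF_nonunit_part:
  assumes closed: "subsemigroup H (carrier H - Units H)"
    and fin: "finite (Units H)" "card (Units H) \<le> 2" and ext: "trivial_ideal_ext H"
    and UQ: "UmF (Pfin1 (H\<lparr>carrier := (carrier H - Units H) \<union> {\<one>}\<rparr>))"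
  shows "UmF P"
proof (cases "Units H = {\<one>}")
  case True
  then have "(carrier H - Units H) \<union> {\<one>} = carrier H"
    by auto
  then show ?thesis
    using UQ by simp
next
  case False
  then obtain u where u: "u \<in> Units H" "u \<noteq> \<one>"
    using Units_one_closed by blast
  then have units: "Units H = {\<one>, u}"
    using Units_eq_pair fin by blast
  interpret power_monoid_involution H u
  proof
    show "u \<in> carrier H" "u \<noteq> \<one>" "u \<otimes> u = \<one>"
      using u units square_eq_one_if_Units_eq_pair by auto
    show "u \<otimes> y = y \<and> y \<otimes> u = y" if "y \<in> carrier H" "y \<noteq> \<one>" "y \<noteq> u" for y
      using ext u(1) that units unfolding trivial_ideal_ext_def by blast
    show "x \<otimes> y \<noteq> u" if "x \<in> carrier H" "y \<in> carrier H" "x \<noteq> u" "y \<noteq> u" for x y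
      using closed that units u unfolding subsemigroup_def by (cases "x = \<one> \<or> y = \<one>") auto
  qed
  have "(carrier H - Units H) \<union> {\<one>} = carrier H - {u}"
    using units u by auto
  then show ?thesis
    using UmF_if_UmF_Diff_u UQ by simp
qed

end

theorem theorem3p6:
  fixes H :: "('a, 'b) monoid_scheme"
  assumes "monoid H"
  shows "UmF (Pfin1 H) \<longleftrightarrow>
    (subsemigroup H (carrier H - Units H) \<and>
     almost_breakable H (carrier H - Units H) \<and>
     finite (Units H) \<and> card (Units H) \<le> 2 \<and>
     trivial_ideal_ext H \<and>
     UmF (Pfin1 (H\<lparr>carrier := (carrier H - Units H) \<union> {\<one>\<^bsub>H\<^esub>}\<rparr>)))"
proof -
  interpret power_monoid H
    by (rule power_monoid.intro) (fact assms)
  show ?thesis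
    using UmF_subsemigroup_nonunits UmF_almost_breakable_nonunits UmF_card_Units
      UmF_trivial_ideal_ext UmF_nonunit_part UmF_if_UmF_nonunit_part by blast
qed

end
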